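(* Fix $q,\beta\in[1,\infty)$ and let $(X,d_X)$ be a $q$-barycentric metric space with constant $\beta$. Then for every $n\in\mathbb{N}$ and every even $m\in 2\mathbb{N}$, every function $f:\mathbb{Z}_{2m}^n\to X$ satisfies $$\Big(\sum_{i=1}^n\sum_{x\in\mathbb{Z}_{2m}^n} d_X\big(f(x+me_i),f(x)\big)^q\Big)^{1/q}\le \big(4n^{1/q}+\beta m\big)\Big(\frac{1}{2^n}\sum_{\varepsilon\in\{-1,1\}^n}\sum_{x\in\mathbb{Z}_{2m}^n} d_X\big(f(x+\varepsilon),f(x)\big)^q\Big)^{1/q}.$$ In particular, if $m\ge \beta^{-1}n^{1/q}$, then the left-hand side is at most $5\beta m$ times the bracketed average on the right (i.e. the metric cotype $q$ inequality holds with constant $\Gamma\le 5\beta$).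
   Context: $\mathbb{Z}_{2m}=\mathbb{Z}/(2m\mathbb{Z})$, additions in arguments of $f$ are modulo $2m$, $e_1,\dots,e_n$ is the standard basis of $\mathbb{Z}_{2m}^n$, and $\varepsilon\in\{-1,1\}^n$ is regarded as an element of $\mathbb{Z}_{2m}^n$. For a set $\Omega$, $\mathscr{P}^{<\infty}_\Omega$ denotes the finitely supported probability measures on $\Omega$; a barycenter map is $\mathfrak{B}:\mathscr{P}^{<\infty}_\Omega\to\Omega$ with $\mathfrak{B}(\delta_x)=x$. For $q\in[1,\infty)$, $\beta>0$, a metric space $(X,d_X)$ is $q$-barycentric with constant $\beta$ if there is a barycenter map $\mathfrak{B}:\mathscr{P}^{<\infty}_X\to X$ with $d_X(\mathfrak{B}(\mu),x)^q+\beta^{-q}\int_X d_X(\mathfrak{B}(\mu),y)^q\,d\mu(y)\le\int_X d_X(x,y)^q\,d\mu(y)$ for all $x\in X$, $\mu\in\mathscr{P}^{<\infty}_X$. *)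

theory Defs
  imports "HOL-Probability.Probability"
begin

text \<open>q-barycentric metric spaces. A finitely supported probability measure is a pmf
with finite support; the barycenter map B only matters on those.\<close>
definition q_barycentric :: "real \<Rightarrow> real \<Rightarrow> ('a::metric_space pmf \<Rightarrow> 'a) \<Rightarrow> bool" where
  "q_barycentric q \<beta> B \<longleftrightarrow>
     (\<forall>x. B (return_pmf x) = x) \<and>
     (\<forall>\<mu> x. finite (set_pmf \<mu>) \<longrightarrow>
        dist (B \<mu>) x powr q + \<beta> powr (-q) * measure_pmf.expectation \<mu> (\<lambda>y. dist (B \<mu>) y powr q)
          \<le> measure_pmf.expectation \<mu> (\<lambda>y. dist x y powr q))"

text \<open>The discrete torus (Z_M)^n, elements represented as functions nat => int with
coordinates i < n in {0..<M} and all other coordinates 0.\<close>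
definition torus :: "nat \<Rightarrow> int \<Rightarrow> (nat \<Rightarrow> int) set" where
  "torus n M = {x. (\<forall>i<n. 0 \<le> x i \<and> x i < M) \<and> (\<forall>i\<ge>n. x i = 0)}"

text \<open>Addition in (Z_M)^n (the second argument may be any integer vector, e.g. m e_i or a sign vector).\<close>
definition tadd :: "nat \<Rightarrow> int \<Rightarrow> (nat \<Rightarrow> int) \<Rightarrow> (nat \<Rightarrow> int) \<Rightarrow> (nat \<Rightarrow> int)" where
  "tadd n M x y = (\<lambda>i. if i < n then (x i + y i) mod M else 0)"

definition unitvec :: "nat \<Rightarrow> (nat \<Rightarrow> int)" where
  "unitvec i = (\<lambda>j. if j = i then 1 else 0)"

definition signs :: "nat \<Rightarrow> (nat \<Rightarrow> int) set" where
  "signs n = {\<epsilon>. (\<forall>i<n. \<epsilon> i = -1 \<or> \<epsilon> i = 1) \<and> (\<forall>i\<ge>n. \<epsilon> i = 0)}"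

end

theory Submission
  imports Defs
begin

(*
  Smooth f one coordinate at a time by barycenters: psi n = f, and psi k y is the barycenter of
  psi (k + 1) at y - e_k and y + e_k. Summing the barycentric inequality over the torus and over
  all sign vectors shows that the deviation A_k = sum_{x,eps} d(f x, psi k (x + eps_{<k}))^q grows
  with k, each step by at least 2^n beta^(-q) times the energy of the k-th smoothing, and A_n is the
  sum on the right-hand side. Since psi (k + 1) is controlled by that energy over two steps in
  direction e_k, a chain of m/2 such steps bounds the sum of d(psi (k+1) y, psi (k+1) (y + m e_k))^q
  by m^q times the energy, hence the total over k by (beta m)^q A_n. Finally d(f (x + m e_k), f x)
  is estimated through the detour x -> x + eps_{<=k} -> x + eps_{<=k} + m e_k -> x + m e_k, and
  Minkowski's inequality yields the constant 2 n^(1/q) + beta m.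
*)

lemma convex_on_powr_nonneg:
  assumes "p \<ge> (1::real)"
  shows "convex_on {0..} (\<lambda>x. x powr p)"
proof (rule convex_on_linorderI)
  fix t x y :: real
  assume t: "0 < t" "t < 1" and xy: "x \<in> {0..}" "y \<in> {0..}" "x < y"
  show "((1 - t) *\<^sub>R x + t *\<^sub>R y) powr p \<le> (1 - t) * x powr p + t * y powr p"
  proof (cases "x = 0")
    case True
    have "t powr p \<le> t powr 1"
      using t assms by (intro powr_mono') auto
    then have "(t * y) powr p \<le> t * y powr p"
      using t xy by (simp add: powr_mult)
    then show ?thesis
      using True assms by simp
  next
    case False
    then have "x > 0" "y > 0"
      using xy by auto
    then show ?thesis
      using convex_onD[OF powr_convex[OF assms], of t x y] t by auto
  qed
qed (simp add: convex_real_interval)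

lemma sum_powr_le_card_powr:
  fixes a :: "'b \<Rightarrow> real"
  assumes "finite J" "q \<ge> 1" "\<And>j. j \<in> J \<Longrightarrow> a j \<ge> 0"
  shows "(sum a J) powr q \<le> real (card J) powr (q - 1) * (\<Sum>j\<in>J. a j powr q)"
proof (cases "J = {}")
  case False
  define c where "c = real (card J)"
  have c: "c > 0"
    using assms(1) False by (simp add: c_def card_gt_0_iff)
  have "(\<Sum>j\<in>J. (1 / c) *\<^sub>R a j) powr q \<le> (\<Sum>j\<in>J. (1 / c) * a j powr q)"
    using assms c by (intro convex_on_sum[OF assms(1) False convex_on_powr_nonneg]) (auto simp: c_def)
  then have "(sum a J / c) powr q \<le> (\<Sum>j\<in>J. a j powr q) / c"
    by (simp add: sum_divide_distrib)
  then have "c powr q * (sum a J / c) powr q \<le> c powr q * ((\<Sum>j\<in>J. a j powr q) / c)"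
    using c by (intro mult_left_mono) auto
  moreover have "c powr q * (sum a J / c) powr q = (sum a J) powr q"
    using c assms by (simp add: powr_divide sum_nonneg)
  moreover have "c powr q * ((\<Sum>j\<in>J. a j powr q) / c) = c powr (q - 1) * (\<Sum>j\<in>J. a j powr q)"
    using c by (simp add: powr_diff)
  ultimately show ?thesis
    by (simp add: c_def)
qed simp

lemma sum_powr_eq_0_imp_eq_0:
  fixes u :: "'b \<Rightarrow> real"
  assumes "finite I" "\<And>i. i \<in> I \<Longrightarrow> u i \<ge> 0" "(\<Sum>i\<in>I. u i powr q) = 0" "i \<in> I"
  shows "u i = 0"
  using assms sum_nonneg_eq_0_iff[of I "\<lambda>i. u i powr q"] by auto

lemma minkowski_sum_powr:
  fixes u v :: "'b \<Rightarrow> real"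
  assumes I: "finite I" and q: "q \<ge> 1"
    and u: "\<And>i. i \<in> I \<Longrightarrow> u i \<ge> 0" and v: "\<And>i. i \<in> I \<Longrightarrow> v i \<ge> 0"
  shows "(\<Sum>i\<in>I. (u i + v i) powr q) powr (1/q)
           \<le> (\<Sum>i\<in>I. u i powr q) powr (1/q) + (\<Sum>i\<in>I. v i powr q) powr (1/q)"
proof -
  define a where "a = (\<Sum>i\<in>I. u i powr q) powr (1/q)"
  define b where "b = (\<Sum>i\<in>I. v i powr q) powr (1/q)"
  have aq: "a powr q = (\<Sum>i\<in>I. u i powr q)" and bq: "b powr q = (\<Sum>i\<in>I. v i powr q)"
    using q by (auto simp: a_def b_def powr_powr sum_nonneg)
  consider "a = 0" | "b = 0" | "a > 0" "b > 0"
    by (force simp: a_def b_def)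
  then show ?thesis
  proof cases
    case 1
    then have "\<And>i. i \<in> I \<Longrightarrow> u i = 0"
      using aq I u by (intro sum_powr_eq_0_imp_eq_0[of I u q]) auto
    then show ?thesis
      by (simp add: a_def[symmetric] 1)
  next
    case 2
    then have "\<And>i. i \<in> I \<Longrightarrow> v i = 0"
      using bq I v by (intro sum_powr_eq_0_imp_eq_0[of I v q]) auto
    then show ?thesis
      by (simp add: b_def[symmetric] 2)
  next
    case 3
    define t where "t = a / (a + b)"
    have t: "0 \<le> t" "t \<le> 1" "1 - t = b / (a + b)"
      using 3 by (auto simp: t_def field_simps)
    have pointwise: "(u i + v i) powr q
        \<le> (a + b) powr q * (t * (u i / a) powr q + (1 - t) * (v i / b) powr q)" if i: "i \<in> I" for i
    proof -
      have "(1 - t) * (v i / b) = v i / (a + b)" "t * (u i / a) = u i / (a + b)"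
        using 3 unfolding t(3) by (simp_all add: t_def)
      then have "u i + v i = (a + b) * ((1 - t) * (v i / b) + t * (u i / a))"
        using 3 by (simp add: add_divide_distrib[symmetric])
      then have "(u i + v i) powr q = (a + b) powr q * ((1 - t) *\<^sub>R (v i / b) + t *\<^sub>R (u i / a)) powr q"
        using 3 u[OF i] v[OF i] t by (simp add: powr_mult)
      also have "\<dots> \<le> (a + b) powr q * ((1 - t) * (v i / b) powr q + t * (u i / a) powr q)"
        using 3 u[OF i] v[OF i] t
        by (intro mult_left_mono convex_onD[OF convex_on_powr_nonneg[OF q]]) auto
      finally show ?thesis
        by (simp add: add.commute)
    qed
    have "(\<Sum>i\<in>I. (u i + v i) powr q)
        \<le> (\<Sum>i\<in>I. (a + b) powr q * (t * (u i powr q / a powr q) + (1 - t) * (v i powr q / b powr q)))"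
      using pointwise u v 3 by (intro sum_mono) (simp add: powr_divide)
    also have "\<dots> = (a + b) powr q * (t * ((\<Sum>i\<in>I. u i powr q) / a powr q)
                                      + (1 - t) * ((\<Sum>i\<in>I. v i powr q) / b powr q))"
      by (simp only: sum_distrib_left[symmetric] sum.distrib sum_divide_distrib[symmetric])
    also have "\<dots> = (a + b) powr q"
      using 3 by (simp add: aq[symmetric] bq[symmetric])
    finally have "(\<Sum>i\<in>I. (u i + v i) powr q) powr (1/q) \<le> ((a + b) powr q) powr (1/q)"
      using q by (intro powr_mono2) (auto intro: sum_nonneg)
    then show ?thesis
      using 3 q by (simp add: powr_powr a_def b_def)
  qed
qed

lemma minkowski_sum_powr3:
  fixes F u v w :: "'b \<Rightarrow> real"
  assumes I: "finite I" and q: "q \<ge> 1"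
    and F: "\<And>i. i \<in> I \<Longrightarrow> 0 \<le> F i \<and> F i \<le> u i + v i + w i"
    and uvw: "\<And>i. i \<in> I \<Longrightarrow> 0 \<le> u i \<and> 0 \<le> v i \<and> 0 \<le> w i"
  shows "(\<Sum>i\<in>I. F i powr q) powr (1/q)
           \<le> (\<Sum>i\<in>I. u i powr q) powr (1/q) + (\<Sum>i\<in>I. v i powr q) powr (1/q)
              + (\<Sum>i\<in>I. w i powr q) powr (1/q)"
proof -
  have "(\<Sum>i\<in>I. F i powr q) powr (1/q) \<le> (\<Sum>i\<in>I. ((u i + v i) + w i) powr q) powr (1/q)"
    using F uvw q by (intro powr_mono2 sum_mono sum_nonneg) auto
  also have "\<dots> \<le> (\<Sum>i\<in>I. (u i + v i) powr q) powr (1/q) + (\<Sum>i\<in>I. w i powr q) powr (1/q)"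
    using uvw by (intro minkowski_sum_powr[OF I q]) auto
  also have "\<dots> \<le> (\<Sum>i\<in>I. u i powr q) powr (1/q) + (\<Sum>i\<in>I. v i powr q) powr (1/q)
                   + (\<Sum>i\<in>I. w i powr q) powr (1/q)"
    using minkowski_sum_powr[OF I q, of u v] uvw by auto
  finally show ?thesis .
qed

lemma dist_le_sum_consecutive:
  fixes g :: "nat \<Rightarrow> 'a::metric_space"
  shows "dist (g 0) (g j) \<le> (\<Sum>i<j. dist (g i) (g (Suc i)))"
proof (induction j)
  case (Suc j)
  then show ?case
    using dist_triangle[of "g 0" "g (Suc j)" "g j"] by simp
qed simp

definition zero_padded :: "nat \<Rightarrow> int set \<Rightarrow> (nat \<Rightarrow> int) set" where
  "zero_padded n A = {x. (\<forall>i<n. x i \<in> A) \<and> (\<forall>i\<ge>n. x i = 0)}"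

lemma torus_eq_zero_padded: "torus n M = zero_padded n {0..<M}"
  by (auto simp: torus_def zero_padded_def)

lemma signs_eq_zero_padded: "signs n = zero_padded n {-1, 1}"
  by (auto simp: signs_def zero_padded_def)

lemma zero_padded_eq_image_PiE:
  "zero_padded n A = (\<lambda>g i. if i < n then g i else 0) ` PiE {..<n} (\<lambda>_. A)"
proof (intro equalityI subsetI)
  fix x
  assume x: "x \<in> zero_padded n A"
  then have "x = (\<lambda>i. if i < n then restrict x {..<n} i else 0)"
    by (auto simp: zero_padded_def fun_eq_iff)
  moreover have "restrict x {..<n} \<in> PiE {..<n} (\<lambda>_. A)"
    using x by (auto simp: zero_padded_def)
  ultimately show "x \<in> (\<lambda>g i. if i < n then g i else 0) ` PiE {..<n} (\<lambda>_. A)"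
    by blast
next
  fix x
  assume "x \<in> (\<lambda>g i. if i < n then g i else 0) ` PiE {..<n} (\<lambda>_. A)"
  then obtain g where g: "g \<in> PiE {..<n} (\<lambda>_. A)" and x: "x = (\<lambda>i. if i < n then g i else 0)"
    by blast
  then show "x \<in> zero_padded n A"
    using PiE_mem[OF g] by (auto simp: zero_padded_def)
qed

lemma finite_zero_padded: "finite A \<Longrightarrow> finite (zero_padded n A)"
  unfolding zero_padded_eq_image_PiE by (intro finite_imageI finite_PiE) auto

lemma card_zero_padded: "card (zero_padded n A) = card A ^ n"
proof -
  have "inj_on (\<lambda>g i. if i < n then g i else 0) (PiE {..<n} (\<lambda>_. A))"
  proof (rule inj_onI)
    fix g h
    assume g: "g \<in> PiE {..<n} (\<lambda>_. A)" and h: "h \<in> PiE {..<n} (\<lambda>_. A)"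
      and eq: "(\<lambda>i. if i < n then g i else 0) = (\<lambda>i. if i < n then h i else 0)"
    show "g = h"
    proof (rule PiE_ext[OF g h])
      fix i
      assume "i \<in> {..<n}"
      then show "g i = h i"
        using fun_cong[OF eq, of i] by simp
    qed
  qed
  then show ?thesis
    unfolding zero_padded_eq_image_PiE by (simp add: card_image card_PiE)
qed

lemma finite_torus: "finite (torus n M)"
  by (simp add: torus_eq_zero_padded finite_zero_padded)

lemma finite_signs: "finite (signs n)"
  by (simp add: signs_eq_zero_padded finite_zero_padded)

lemma card_signs: "card (signs n) = 2 ^ n"
  by (simp add: signs_eq_zero_padded card_zero_padded numeral_2_eq_2)

lemma tadd_in_torus: "M > 0 \<Longrightarrow> tadd n M x v \<in> torus n M"
  by (auto simp: tadd_def torus_def)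

lemma tadd_tadd: "tadd n M (tadd n M x u) v = tadd n M x (\<lambda>i. u i + v i)"
  by (auto simp: tadd_def fun_eq_iff mod_add_left_eq add.assoc)

lemma tadd_cong: "(\<And>i. i < n \<Longrightarrow> u i = v i) \<Longrightarrow> tadd n M x u = tadd n M x v"
  by (auto simp: tadd_def fun_eq_iff)

lemma tadd_eq_self: "x \<in> torus n M \<Longrightarrow> (\<And>i. i < n \<Longrightarrow> v i = 0) \<Longrightarrow> tadd n M x v = x"
  by (auto simp: tadd_def fun_eq_iff torus_def)

lemma sum_torus_translate:
  assumes "M > 0"
  shows "(\<Sum>x\<in>torus n M. g (tadd n M x v)) = (\<Sum>x\<in>torus n M. g x)"
  by (rule sum.reindex_bij_witness[where j = "\<lambda>x. tadd n M x v" and i = "\<lambda>x. tadd n M x (\<lambda>i. - v i)"])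
     (simp_all add: tadd_tadd tadd_eq_self tadd_in_torus assms)

definition axis_vec :: "nat \<Rightarrow> int \<Rightarrow> nat \<Rightarrow> int" where
  "axis_vec k s = (\<lambda>i. if i = k then s else 0)"

definition truncate_vec :: "nat \<Rightarrow> (nat \<Rightarrow> int) \<Rightarrow> nat \<Rightarrow> int" where
  "truncate_vec k e = (\<lambda>i. if i < k then e i else 0)"

lemma axis_vec_add: "(\<lambda>i. axis_vec k a i + axis_vec k b i) = axis_vec k (a + b)"
  by (auto simp: axis_vec_def fun_eq_iff)

lemma truncate_vec_Suc: "truncate_vec (Suc k) e = (\<lambda>i. truncate_vec k e i + axis_vec k (e k) i)"
  by (auto simp: truncate_vec_def axis_vec_def fun_eq_iff)

text \<open>Averaging over the sign of the k-th coordinate is absorbed by the sum over all sign vectors,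
  since flipping e k permutes signs n.\<close>
lemma sum_signs_average_coordinate:
  fixes G :: "(nat \<Rightarrow> int) \<Rightarrow> real"
  assumes "k < n"
  shows "(\<Sum>e\<in>signs n. (\<Sum>s\<in>{-1,1}. G (\<lambda>i. truncate_vec k e i + axis_vec k s i)) / 2)
       = (\<Sum>e\<in>signs n. G (truncate_vec (Suc k) e))"
proof -
  let ?flip = "\<lambda>e::nat\<Rightarrow>int. e(k := - e k)"
  let ?G' = "\<lambda>e. G (\<lambda>i. truncate_vec k e i + axis_vec k (- e k) i)"
  have "(\<Sum>e\<in>signs n. G (truncate_vec (Suc k) e)) = (\<Sum>e\<in>signs n. G (truncate_vec (Suc k) (?flip e)))"
    using assms by (intro sum.reindex_bij_witness[where i = ?flip and j = ?flip]) (auto simp: signs_def)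
  also have "\<dots> = (\<Sum>e\<in>signs n. ?G' e)"
    by (intro sum.cong refl arg_cong[where f = G]) (auto simp: truncate_vec_def axis_vec_def fun_eq_iff)
  finally have flipped: "(\<Sum>e\<in>signs n. G (truncate_vec (Suc k) e)) = (\<Sum>e\<in>signs n. ?G' e)" .
  have "(\<Sum>e\<in>signs n. (\<Sum>s\<in>{-1,1}. G (\<lambda>i. truncate_vec k e i + axis_vec k s i)) / 2)
      = (\<Sum>e\<in>signs n. (G (truncate_vec (Suc k) e) + ?G' e) / 2)"
  proof (intro sum.cong refl)
    fix e
    assume "e \<in> signs n"
    then have "e k = -1 \<or> e k = 1"
      using assms by (auto simp: signs_def)
    then show "(\<Sum>s\<in>{-1,1}. G (\<lambda>i. truncate_vec k e i + axis_vec k s i)) / 2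
             = (G (truncate_vec (Suc k) e) + ?G' e) / 2"
      unfolding truncate_vec_Suc by auto
  qed
  also have "\<dots> = (\<Sum>e\<in>signs n. G (truncate_vec (Suc k) e))"
    using flipped by (simp add: sum_divide_distrib[symmetric] sum.distrib)
  finally show ?thesis .
qed

locale barycentric_smoothing =
  fixes q \<beta> :: real and B :: "'a::metric_space pmf \<Rightarrow> 'a"
    and n :: nat and M :: int and f :: "(nat \<Rightarrow> int) \<Rightarrow> 'a"
  assumes q_ge_1: "q \<ge> 1" and beta_pos: "\<beta> > 0" and barycentric: "q_barycentric q \<beta> B"
    and M_pos: "M > 0"
begin

abbreviation T where "T \<equiv> torus n M"
abbreviation S where "S \<equiv> signs n"

lemma sum_T_translate: "(\<Sum>x\<in>T. g (tadd n M x v)) = (\<Sum>x\<in>T. g x)"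
  by (rule sum_torus_translate[OF M_pos])

text \<open>smoothing j averages out the last j coordinates; indexing from the top makes psi a primitive
  recursion.\<close>
primrec smoothing :: "nat \<Rightarrow> (nat \<Rightarrow> int) \<Rightarrow> 'a" where
  "smoothing 0 = f"
| "smoothing (Suc j) = (\<lambda>y. B (map_pmf (\<lambda>s. smoothing j (tadd n M y (axis_vec (n - Suc j) s)))
                                       (pmf_of_set {-1, 1})))"

definition psi :: "nat \<Rightarrow> (nat \<Rightarrow> int) \<Rightarrow> 'a" where
  "psi k = smoothing (n - k)"

definition neighbour_pmf :: "nat \<Rightarrow> (nat \<Rightarrow> int) \<Rightarrow> 'a pmf" where
  "neighbour_pmf k y = map_pmf (\<lambda>s. psi (Suc k) (tadd n M y (axis_vec k s))) (pmf_of_set {-1, 1})"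

lemma psi_n: "psi n = f"
  by (simp add: psi_def)

lemma psi_eq_barycenter: "k < n \<Longrightarrow> psi k y = B (neighbour_pmf k y)"
  by (simp add: psi_def neighbour_pmf_def Suc_diff_Suc[symmetric] diff_Suc_diff_eq2)

lemma barycentric_psi:
  assumes "k < n"
  shows "dist z (psi k y) powr q
           + \<beta> powr (-q) * ((\<Sum>s\<in>{-1,1}. dist (psi k y) (psi (Suc k) (tadd n M y (axis_vec k s))) powr q) / 2)
         \<le> (\<Sum>s\<in>{-1,1}. dist z (psi (Suc k) (tadd n M y (axis_vec k s))) powr q) / 2"
proof -
  have "finite (set_pmf (neighbour_pmf k y))"
    by (simp add: neighbour_pmf_def)
  then have "dist (B (neighbour_pmf k y)) z powr q
          + \<beta> powr (-q) * measure_pmf.expectation (neighbour_pmf k y) (\<lambda>w. dist (B (neighbour_pmf k y)) w powr q)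
        \<le> measure_pmf.expectation (neighbour_pmf k y) (\<lambda>w. dist z w powr q)"
    using barycentric unfolding q_barycentric_def by blast
  then show ?thesis
    by (simp add: psi_eq_barycenter[OF assms] neighbour_pmf_def integral_pmf_of_set dist_commute)
qed

definition deviation :: "nat \<Rightarrow> real" where
  "deviation k = (\<Sum>x\<in>T. \<Sum>e\<in>S. dist (f x) (psi k (tadd n M x (truncate_vec k e))) powr q)"

definition energy :: "nat \<Rightarrow> real" where
  "energy k = (\<Sum>y\<in>T. (\<Sum>s\<in>{-1,1}. dist (psi k y) (psi (Suc k) (tadd n M y (axis_vec k s))) powr q) / 2)"

lemma deviation_nonneg: "deviation k \<ge> 0"
  unfolding deviation_def by (intro sum_nonneg) auto

lemma energy_nonneg: "energy k \<ge> 0"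
  unfolding energy_def by (intro sum_nonneg divide_nonneg_pos) auto

lemma deviation_n: "deviation n = (\<Sum>e\<in>S. \<Sum>x\<in>T. dist (f (tadd n M x e)) (f x) powr q)"
proof -
  have "tadd n M x (truncate_vec n e) = tadd n M x e" for x e
    by (rule tadd_cong) (simp add: truncate_vec_def)
  then show ?thesis
    unfolding deviation_def psi_n by (simp add: dist_commute sum.swap[of _ T])
qed

lemma deviation_Suc:
  assumes "k < n"
  shows "deviation k + \<beta> powr (-q) * (2 ^ n * energy k) \<le> deviation (Suc k)"
proof -
  let ?H = "\<lambda>y. (\<Sum>s\<in>{-1,1}. dist (psi k y) (psi (Suc k) (tadd n M y (axis_vec k s))) powr q) / 2"
  let ?G = "\<lambda>x v. dist (f x) (psi (Suc k) (tadd n M x v)) powr q"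
  have pointwise: "dist (f x) (psi k (tadd n M x (truncate_vec k e))) powr q
                     + \<beta> powr (-q) * ?H (tadd n M x (truncate_vec k e))
                   \<le> (\<Sum>s\<in>{-1,1}. ?G x (\<lambda>i. truncate_vec k e i + axis_vec k s i)) / 2" for x e
    using barycentric_psi[OF assms, of "f x" "tadd n M x (truncate_vec k e)"] by (simp add: tadd_tadd)
  have "deviation k + \<beta> powr (-q) * (\<Sum>x\<in>T. \<Sum>e\<in>S. ?H (tadd n M x (truncate_vec k e)))
      = (\<Sum>x\<in>T. \<Sum>e\<in>S. dist (f x) (psi k (tadd n M x (truncate_vec k e))) powr q
                          + \<beta> powr (-q) * ?H (tadd n M x (truncate_vec k e)))"
    by (simp add: deviation_def sum.distrib sum_distrib_left)
  also have "\<dots> \<le> (\<Sum>x\<in>T. \<Sum>e\<in>S. (\<Sum>s\<in>{-1,1}. ?G x (\<lambda>i. truncate_vec k e i + axis_vec k s i)) / 2)"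
    by (intro sum_mono pointwise)
  also have "\<dots> = deviation (Suc k)"
    unfolding deviation_def by (intro sum.cong refl sum_signs_average_coordinate[OF assms])
  finally have "deviation k + \<beta> powr (-q) * (\<Sum>x\<in>T. \<Sum>e\<in>S. ?H (tadd n M x (truncate_vec k e)))
      \<le> deviation (Suc k)" .
  moreover have "(\<Sum>x\<in>T. \<Sum>e\<in>S. ?H (tadd n M x (truncate_vec k e)))
      = (\<Sum>e\<in>S. \<Sum>x\<in>T. ?H (tadd n M x (truncate_vec k e)))"
    by (rule sum.swap)
  moreover have "\<dots> = (\<Sum>e\<in>S. energy k)"
    unfolding energy_def by (intro sum.cong refl sum_T_translate)
  ultimately show ?thesis
    by (simp add: card_signs)
qed

lemma deviation_mono: "k \<le> j \<Longrightarrow> j \<le> n \<Longrightarrow> deviation k \<le> deviation j"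
proof (induction j rule: dec_induct)
  case (step j)
  have "0 \<le> \<beta> powr (-q) * (2 ^ n * energy j)"
    using energy_nonneg by simp
  with step deviation_Suc[of j] show ?case
    by linarith
qed simp

lemma sum_energy_le: "2 ^ n * (\<Sum>k<n. energy k) \<le> \<beta> powr q * deviation n"
proof -
  have "2 ^ n * energy k \<le> \<beta> powr q * (deviation (Suc k) - deviation k)" if "k < n" for k
  proof -
    have "\<beta> powr q * (\<beta> powr (-q) * (2 ^ n * energy k)) \<le> \<beta> powr q * (deviation (Suc k) - deviation k)"
      using deviation_Suc[OF that] by (intro mult_left_mono) auto
    moreover have "\<beta> powr q * \<beta> powr (-q) = 1"
      using beta_pos by (simp add: powr_minus)
    ultimately show ?thesis
      by (simp add: mult.assoc[symmetric])
  qed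
  then have "(\<Sum>k<n. 2 ^ n * energy k) \<le> (\<Sum>k<n. \<beta> powr q * (deviation (Suc k) - deviation k))"
    by (intro sum_mono) auto
  also have "\<dots> = \<beta> powr q * (deviation n - deviation 0)"
    by (simp add: sum_distrib_left[symmetric] sum_lessThan_telescope)
  also have "\<dots> \<le> \<beta> powr q * deviation n"
    using deviation_nonneg[of 0] by (intro mult_left_mono) auto
  finally show ?thesis
    by (simp add: sum_distrib_left)
qed

lemma sum_dist_psi_double_step:
  "(\<Sum>y\<in>T. dist (psi (Suc k) y) (psi (Suc k) (tadd n M y (axis_vec k 2))) powr q) \<le> 2 powr q * energy k"
proof -
  let ?P = "psi (Suc k)"
  let ?mid = "\<lambda>y. psi k (tadd n M y (axis_vec k 1))"
  let ?a = "\<lambda>y. dist (?P y) (?mid y)"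
  let ?b = "\<lambda>y. dist (?mid y) (?P (tadd n M (tadd n M y (axis_vec k 1)) (axis_vec k 1)))"
  have two_steps: "tadd n M (tadd n M y (axis_vec k 1)) (axis_vec k 1) = tadd n M y (axis_vec k 2)" for y
    by (simp only: tadd_tadd axis_vec_add) simp
  have pointwise: "dist (?P y) (?P (tadd n M y (axis_vec k 2))) powr q \<le> 2 powr (q - 1) * (?a y powr q + ?b y powr q)"
    for y
  proof -
    have "dist (?P y) (?P (tadd n M y (axis_vec k 2))) powr q \<le> (?a y + ?b y) powr q"
      unfolding two_steps[symmetric] using q_ge_1 by (intro powr_mono2 dist_triangle) auto
    also have "\<dots> \<le> 2 powr (q - 1) * (?a y powr q + ?b y powr q)"
      using sum_powr_le_card_powr[of "{0::nat, 1}" q "\<lambda>j. if j = 0 then ?a y else ?b y"] q_ge_1 by simp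
    finally show ?thesis .
  qed
  have back_step: "tadd n M (tadd n M y (axis_vec k 1)) (axis_vec k (-1)) = y" if "y \<in> T" for y
    using that by (simp add: tadd_tadd axis_vec_add tadd_eq_self axis_vec_def)
  have "(\<Sum>y\<in>T. ?a y powr q) = (\<Sum>y\<in>T. (\<lambda>w. dist (psi k w) (?P (tadd n M w (axis_vec k (-1)))) powr q)
                                            (tadd n M y (axis_vec k 1)))"
    by (intro sum.cong refl) (simp add: back_step dist_commute)
  also have "\<dots> = (\<Sum>w\<in>T. dist (psi k w) (?P (tadd n M w (axis_vec k (-1)))) powr q)"
    by (rule sum_T_translate)
  finally have sum_a: "(\<Sum>y\<in>T. ?a y powr q) = (\<Sum>w\<in>T. dist (psi k w) (?P (tadd n M w (axis_vec k (-1)))) powr q)" .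
  have sum_b: "(\<Sum>y\<in>T. ?b y powr q) = (\<Sum>w\<in>T. dist (psi k w) (?P (tadd n M w (axis_vec k 1))) powr q)"
    by (rule sum_T_translate)
  have "(\<Sum>y\<in>T. dist (?P y) (?P (tadd n M y (axis_vec k 2))) powr q)
      \<le> (\<Sum>y\<in>T. 2 powr (q - 1) * (?a y powr q + ?b y powr q))"
    by (intro sum_mono pointwise)
  also have "\<dots> = 2 powr (q - 1) * ((\<Sum>y\<in>T. ?a y powr q) + (\<Sum>y\<in>T. ?b y powr q))"
    by (simp only: sum_distrib_left distrib_left sum.distrib)
  also have "(\<Sum>y\<in>T. ?a y powr q) + (\<Sum>y\<in>T. ?b y powr q) = 2 * energy k"
    unfolding sum_a sum_b energy_def by (simp add: sum.distrib sum_divide_distrib[symmetric] add.commute)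
  also have "2 powr (q - 1) * (2 * energy k) = 2 powr q * energy k"
    by (simp add: powr_diff)
  finally show ?thesis .
qed

lemma sum_dist_psi_even_step:
  assumes "even m"
  shows "(\<Sum>y\<in>T. dist (psi (Suc k) y) (psi (Suc k) (tadd n M y (axis_vec k (int m)))) powr q)
         \<le> real m powr q * energy k"
proof -
  let ?P = "psi (Suc k)"
  let ?walk = "\<lambda>y i. ?P (tadd n M y (axis_vec k (2 * int i)))"
  define N where "N = m div 2"
  have m_eq: "int m = 2 * int N" "real m = 2 * real N"
    using assms by (auto simp: N_def)
  have start: "?walk y 0 = ?P y" if "y \<in> T" for y
    using that by (simp add: tadd_eq_self axis_vec_def)
  have step: "(\<Sum>y\<in>T. dist (?walk y i) (?walk y (Suc i)) powr q) \<le> 2 powr q * energy k" for i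
  proof -
    have "(\<Sum>y\<in>T. dist (?walk y i) (?walk y (Suc i)) powr q)
        = (\<Sum>y\<in>T. (\<lambda>w. dist (?P w) (?P (tadd n M w (axis_vec k 2))) powr q) (tadd n M y (axis_vec k (2 * int i))))"
      by (simp add: tadd_tadd axis_vec_add add.commute)
    also have "\<dots> = (\<Sum>w\<in>T. dist (?P w) (?P (tadd n M w (axis_vec k 2))) powr q)"
      by (rule sum_T_translate)
    finally show ?thesis
      using sum_dist_psi_double_step[of k] by simp
  qed
  have "(\<Sum>y\<in>T. dist (?P y) (?P (tadd n M y (axis_vec k (int m)))) powr q)
      \<le> (\<Sum>y\<in>T. real N powr (q - 1) * (\<Sum>i<N. dist (?walk y i) (?walk y (Suc i)) powr q))"
  proof (intro sum_mono)
    fix y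
    assume "y \<in> T"
    then have "dist (?P y) (?P (tadd n M y (axis_vec k (int m)))) powr q
             \<le> (\<Sum>i<N. dist (?walk y i) (?walk y (Suc i))) powr q"
      using dist_le_sum_consecutive[of "?walk y" N] q_ge_1 start by (intro powr_mono2) (auto simp: m_eq)
    also have "\<dots> \<le> real N powr (q - 1) * (\<Sum>i<N. dist (?walk y i) (?walk y (Suc i)) powr q)"
      using sum_powr_le_card_powr[of "{..<N}" q] q_ge_1 by simp
    finally show "dist (?P y) (?P (tadd n M y (axis_vec k (int m)))) powr q
             \<le> real N powr (q - 1) * (\<Sum>i<N. dist (?walk y i) (?walk y (Suc i)) powr q)" .
  qed
  also have "\<dots> = real N powr (q - 1) * (\<Sum>i<N. \<Sum>y\<in>T. dist (?walk y i) (?walk y (Suc i)) powr q)"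
    by (simp add: sum_distrib_left sum.swap[of _ T])
  also have "\<dots> \<le> real N powr (q - 1) * (\<Sum>i<N. 2 powr q * energy k)"
    by (intro mult_left_mono sum_mono step) auto
  also have "\<dots> = real m powr q * energy k"
    using q_ge_1 by (cases "N = 0") (auto simp: m_eq powr_diff powr_mult)
  finally show ?thesis .
qed

lemma sum_dist_f_psi_le:
  "(\<Sum>k<n. \<Sum>x\<in>T. \<Sum>e\<in>S. dist (f x) (psi (Suc k) (tadd n M x (truncate_vec (Suc k) e))) powr q)
   \<le> real n * deviation n"
proof -
  have "(\<Sum>k<n. deviation (Suc k)) \<le> (\<Sum>k<n. deviation n)"
    by (intro sum_mono deviation_mono) auto
  then show ?thesis
    by (simp add: deviation_def)
qed

lemma sum_dist_psi_f_translate_le: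
  "(\<Sum>k<n. \<Sum>x\<in>T. \<Sum>e\<in>S.
      dist (psi (Suc k) (tadd n M (tadd n M x (truncate_vec (Suc k) e)) (v k))) (f (tadd n M x (v k))) powr q)
   \<le> real n * deviation n"
proof -
  let ?D = "\<lambda>k x. \<Sum>e\<in>S. dist (f x) (psi (Suc k) (tadd n M x (truncate_vec (Suc k) e))) powr q"
  have "(\<Sum>k<n. \<Sum>x\<in>T. \<Sum>e\<in>S.
           dist (psi (Suc k) (tadd n M (tadd n M x (truncate_vec (Suc k) e)) (v k))) (f (tadd n M x (v k))) powr q)
        = (\<Sum>k<n. \<Sum>x\<in>T. ?D k (tadd n M x (v k)))"
    by (simp add: tadd_tadd add.commute dist_commute)
  also have "\<dots> = (\<Sum>k<n. \<Sum>x\<in>T. ?D k x)"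
    by (intro sum.cong refl sum_T_translate)
  also have "\<dots> \<le> real n * deviation n"
    by (rule sum_dist_f_psi_le)
  finally show ?thesis .
qed

lemma sum_dist_psi_shift_le:
  assumes "even m"
  shows "(\<Sum>k<n. \<Sum>x\<in>T. \<Sum>e\<in>S.
            dist (psi (Suc k) (tadd n M x (truncate_vec (Suc k) e)))
                 (psi (Suc k) (tadd n M (tadd n M x (truncate_vec (Suc k) e)) (axis_vec k (int m)))) powr q)
         \<le> (\<beta> * real m) powr q * deviation n"
proof -
  let ?g = "\<lambda>k y. dist (psi (Suc k) y) (psi (Suc k) (tadd n M y (axis_vec k (int m)))) powr q"
  have "(\<Sum>k<n. \<Sum>x\<in>T. \<Sum>e\<in>S. ?g k (tadd n M x (truncate_vec (Suc k) e)))
      = (\<Sum>k<n. \<Sum>e\<in>S. \<Sum>x\<in>T. ?g k (tadd n M x (truncate_vec (Suc k) e)))"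
    by (simp add: sum.swap[of _ T])
  also have "\<dots> = (\<Sum>k<n. \<Sum>e\<in>S. \<Sum>y\<in>T. ?g k y)"
    by (intro sum.cong refl sum_T_translate)
  also have "\<dots> = (\<Sum>k<n. 2 ^ n * (\<Sum>y\<in>T. ?g k y))"
    by (simp add: card_signs)
  also have "\<dots> \<le> (\<Sum>k<n. 2 ^ n * (real m powr q * energy k))"
    by (intro sum_mono mult_left_mono sum_dist_psi_even_step assms) auto
  also have "\<dots> = real m powr q * (2 ^ n * (\<Sum>k<n. energy k))"
    by (simp add: sum_distrib_left mult_ac)
  also have "\<dots> \<le> real m powr q * (\<beta> powr q * deviation n)"
    by (intro mult_left_mono sum_energy_le) auto
  finally show ?thesis
    using beta_pos by (simp add: powr_mult mult_ac)
qed

lemma sum_shift_dist_powr_le: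
  assumes "even m"
  shows "(\<Sum>k<n. \<Sum>x\<in>T. dist (f (tadd n M x (axis_vec k (int m)))) (f x) powr q) powr (1/q)
         \<le> (2 * real n powr (1/q) + \<beta> * real m) * (deviation n / 2 ^ n) powr (1/q)"
proof -
  let ?I = "{..<n} \<times> T \<times> S"
  let ?norm = "\<lambda>g. (\<Sum>p\<in>?I. g p powr q) powr (1/q)"
  let ?y = "\<lambda>k x e. tadd n M x (truncate_vec (Suc k) e)"
  let ?sh = "\<lambda>k y. tadd n M y (axis_vec k (int m))"
  define F where "F = (\<lambda>(k, x, e::nat \<Rightarrow> int). dist (f (?sh k x)) (f x))"
  define u where "u = (\<lambda>(k, x, e). dist (f x) (psi (Suc k) (?y k x e)))"
  define v where "v = (\<lambda>(k, x, e). dist (psi (Suc k) (?y k x e)) (psi (Suc k) (?sh k (?y k x e))))"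
  define w where "w = (\<lambda>(k, x, e). dist (psi (Suc k) (?sh k (?y k x e))) (f (?sh k x)))"
  define A where "A = deviation n"
  have q_pos: "q > 0"
    using q_ge_1 by simp
  have A: "A \<ge> 0"
    by (simp add: A_def deviation_nonneg)
  have sum_I: "(\<Sum>p\<in>?I. g p) = (\<Sum>k<n. \<Sum>x\<in>T. \<Sum>e\<in>S. g (k, x, e))" for g :: "_ \<Rightarrow> real"
    by (simp add: sum.cartesian_product)
  have norm_le: "?norm g \<le> c powr (1/q)" if "(\<Sum>p\<in>?I. g p powr q) \<le> c" for g c
    using that q_pos by (intro powr_mono2) (auto intro: sum_nonneg)
  have F_le: "F p \<le> u p + v p + w p" for p
  proof (cases p)
    case (fields k x e)
    have "dist (f (?sh k x)) (f x) \<le> dist (f x) (psi (Suc k) (?y k x e)) + dist (psi (Suc k) (?y k x e)) (f (?sh k x))"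
      by (subst dist_commute) (rule dist_triangle)
    also have "dist (psi (Suc k) (?y k x e)) (f (?sh k x))
             \<le> dist (psi (Suc k) (?y k x e)) (psi (Suc k) (?sh k (?y k x e)))
               + dist (psi (Suc k) (?sh k (?y k x e))) (f (?sh k x))"
      by (rule dist_triangle)
    finally show ?thesis
      by (simp add: fields F_def u_def v_def w_def)
  qed
  have "(2 ^ n * (\<Sum>k<n. \<Sum>x\<in>T. dist (f (?sh k x)) (f x) powr q)) powr (1/q) = ?norm F"
    by (simp add: sum_I F_def card_signs sum_distrib_left)
  also have "\<dots> \<le> ?norm u + ?norm v + ?norm w"
    using finite_torus finite_signs q_ge_1 F_le
    by (intro minkowski_sum_powr3) (auto simp: F_def u_def v_def w_def)
  also have "\<dots> \<le> (real n * A) powr (1/q) + ((\<beta> * real m) powr q * A) powr (1/q) + (real n * A) powr (1/q)"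
    using sum_dist_f_psi_le sum_dist_psi_shift_le[OF assms] sum_dist_psi_f_translate_le
    by (intro add_mono norm_le) (simp_all add: sum_I u_def v_def w_def A_def)
  also have "\<dots> = (2 * real n powr (1/q) + \<beta> * real m) * A powr (1/q)"
    using A beta_pos q_pos by (simp add: powr_mult powr_powr algebra_simps)
  also have "\<dots> = (2 ^ n) powr (1/q) * ((2 * real n powr (1/q) + \<beta> * real m) * (A / 2 ^ n) powr (1/q))"
    using A by (simp add: powr_divide)
  finally show ?thesis
    by (simp add: A_def powr_mult sum_nonneg)
qed

end

theorem theorem1p4:
  fixes q \<beta> :: real and B :: "'a::metric_space pmf \<Rightarrow> 'a"
    and n m :: nat and f :: "(nat \<Rightarrow> int) \<Rightarrow> 'a"
  assumes "q \<ge> 1" and "\<beta> \<ge> 1" and "q_barycentric q \<beta> B"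
    and "n \<ge> 1" and "m > 0" and "even m"
  shows "(let M = 2 * int m;
              L = (\<Sum>i<n. \<Sum>x\<in>torus n M. dist (f (tadd n M x (\<lambda>j. int m * unitvec i j))) (f x) powr q) powr (1/q);
              R = ((1 / 2 ^ n) * (\<Sum>\<epsilon>\<in>signs n. \<Sum>x\<in>torus n M. dist (f (tadd n M x \<epsilon>)) (f x) powr q)) powr (1/q)
          in L \<le> (4 * real n powr (1/q) + \<beta> * real m) * R
             \<and> (real m \<ge> real n powr (1/q) / \<beta> \<longrightarrow> L \<le> 5 * \<beta> * real m * R))"
proof -
  interpret barycentric_smoothing q \<beta> B n "2 * int m" f
    using assms by unfold_locales auto
  define L where "L = (\<Sum>i<n. \<Sum>x\<in>T. dist (f (tadd n (2 * int m) x (\<lambda>j. int m * unitvec i j))) (f x) powr q) powr (1/q)"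
  define R where "R = ((1 / 2 ^ n) * (\<Sum>\<epsilon>\<in>S. \<Sum>x\<in>T. dist (f (tadd n (2 * int m) x \<epsilon>)) (f x) powr q)) powr (1/q)"
  have "(\<lambda>j. int m * unitvec i j) = axis_vec i (int m)" for i
    by (auto simp: unitvec_def axis_vec_def)
  then have main: "L \<le> (2 * real n powr (1/q) + \<beta> * real m) * R"
    using sum_shift_dist_powr_le[OF \<open>even m\<close>] by (simp add: L_def R_def deviation_n)
  have "R \<ge> 0"
    by (simp add: R_def)
  then have bound: "L \<le> (4 * real n powr (1/q) + \<beta> * real m) * R"
    using main by (smt (verit) mult_right_mono powr_ge_zero)
  have "L \<le> 5 * \<beta> * real m * R" if "real m \<ge> real n powr (1/q) / \<beta>"
  proof -
    have "real n powr (1/q) \<le> \<beta> * real m"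
      using that assms(2) by (simp add: field_simps)
    then have "4 * real n powr (1/q) + \<beta> * real m \<le> 5 * \<beta> * real m"
      by linarith
    then show ?thesis
      using \<open>R \<ge> 0\<close> bound by (meson mult_right_mono order_trans)
  qed
  with bound show ?thesis
    by (simp add: Let_def L_def R_def)
qed

end
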